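(* Let $G$ be a connected graph with $n(G)\ge 5$ and $\omega(G)=n(G)-2$. Then $$n(G)-4\le \dim_l(G)\le n(G)-3,$$ where $\dim_l(G)=n(G)-3$ if and only if $G$ is $\{\Gamma_1,\Gamma_2\}$-free, and $\dim_l(G)=n(G)-4$ if and only if $G$ contains an induced subgraph isomorphic to $\Gamma_1$ or $\Gamma_2$.
   Context: All graphs are finite and simple. $n(G)$ is the number of vertices and $\omega(G)$ the clique number of $G$. For vertices $x,y$ of a connected graph $G$, $d_G(x,y)$ is the length of a shortest $x,y$-path. A vertex $w$ distinguishes vertices $u,v$ if $d_G(u,w)\neq d_G(v,w)$. A set $W\subseteq V(G)$ is a local resolving set of $G$ if for every pair of adjacent vertices $u,v\in V(G)\setminus W$ some vertex of $W$ distinguishes $u$ and $v$. The local metric dimension $\dim_l(G)$ is the minimum cardinality of a local resolving set of $G$. $\Gamma_1$ is the graph with vertex set $\{v_1,\dots,v_6\}$ and edge set $\{v_iv_j: i\ne j,\ i,j\in\{1,2,3,4\}\}\cup\{v_1v_5,v_1v_6,v_2v_5,v_3v_6\}$; $\Gamma_2$ is obtained from $\Gamma_1$ by adding the edge $v_5v_6$. A graph is $\{\Gamma_1,\Gamma_2\}$-free if it has no induced subgraph isomorphic to $\Gamma_1$ or to $\Gamma_2$. *)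

theory Defs
  imports Main
begin

definition simple_graph :: "'a set \<Rightarrow> ('a \<Rightarrow> 'a \<Rightarrow> bool) \<Rightarrow> bool" where
  "simple_graph V E \<longleftrightarrow> finite V \<and> (\<forall>x y. E x y \<longrightarrow> x \<in> V \<and> y \<in> V)
     \<and> (\<forall>x y. E x y \<longrightarrow> E y x) \<and> (\<forall>x. \<not> E x x)"

inductive walk :: "'a set \<Rightarrow> ('a \<Rightarrow> 'a \<Rightarrow> bool) \<Rightarrow> 'a \<Rightarrow> 'a \<Rightarrow> nat \<Rightarrow> bool"
  for V E where
  walk_nil: "x \<in> V \<Longrightarrow> walk V E x x 0"
| walk_cons: "E x y \<Longrightarrow> walk V E y z k \<Longrightarrow> walk V E x z (Suc k)"

definition connected_graph :: "'a set \<Rightarrow> ('a \<Rightarrow> 'a \<Rightarrow> bool) \<Rightarrow> bool" where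
  "connected_graph V E \<longleftrightarrow> V \<noteq> {} \<and> (\<forall>x\<in>V. \<forall>y\<in>V. \<exists>k. walk V E x y k)"

definition gdist :: "'a set \<Rightarrow> ('a \<Rightarrow> 'a \<Rightarrow> bool) \<Rightarrow> 'a \<Rightarrow> 'a \<Rightarrow> nat" where
  "gdist V E x y = (LEAST k. walk V E x y k)"

definition distinguishes :: "'a set \<Rightarrow> ('a \<Rightarrow> 'a \<Rightarrow> bool) \<Rightarrow> 'a \<Rightarrow> 'a \<Rightarrow> 'a \<Rightarrow> bool" where
  "distinguishes V E w u v \<longleftrightarrow> gdist V E u w \<noteq> gdist V E v w"

definition local_resolving_set :: "'a set \<Rightarrow> ('a \<Rightarrow> 'a \<Rightarrow> bool) \<Rightarrow> 'a set \<Rightarrow> bool" where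
  "local_resolving_set V E W \<longleftrightarrow> W \<subseteq> V \<and>
     (\<forall>u\<in>V - W. \<forall>v\<in>V - W. E u v \<longrightarrow> (\<exists>w\<in>W. distinguishes V E w u v))"

definition local_metric_dim :: "'a set \<Rightarrow> ('a \<Rightarrow> 'a \<Rightarrow> bool) \<Rightarrow> nat" where
  "local_metric_dim V E = Min {card W | W. local_resolving_set V E W}"

definition is_clique :: "'a set \<Rightarrow> ('a \<Rightarrow> 'a \<Rightarrow> bool) \<Rightarrow> 'a set \<Rightarrow> bool" where
  "is_clique V E K \<longleftrightarrow> K \<subseteq> V \<and> (\<forall>x\<in>K. \<forall>y\<in>K. x \<noteq> y \<longrightarrow> E x y)"

definition clique_number :: "'a set \<Rightarrow> ('a \<Rightarrow> 'a \<Rightarrow> bool) \<Rightarrow> nat" where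
  "clique_number V E = Max {card K | K. is_clique V E K}"

definition Gamma1_edge :: "nat \<Rightarrow> nat \<Rightarrow> bool" where
  "Gamma1_edge i j \<longleftrightarrow> i \<noteq> j \<and> ((i \<in> {1..4} \<and> j \<in> {1..4}) \<or>
     {i, j} \<in> {{1,5}, {1,6}, {2,5}, {3,6}})"

definition Gamma2_edge :: "nat \<Rightarrow> nat \<Rightarrow> bool" where
  "Gamma2_edge i j \<longleftrightarrow> Gamma1_edge i j \<or> {i, j} = {5, 6}"

definition has_induced :: "'a set \<Rightarrow> ('a \<Rightarrow> 'a \<Rightarrow> bool) \<Rightarrow> (nat \<Rightarrow> nat \<Rightarrow> bool) \<Rightarrow> bool" where
  "has_induced V E H \<longleftrightarrow> (\<exists>f :: nat \<Rightarrow> 'a. inj_on f {1..6} \<and> f ` {1..6} \<subseteq> V \<and>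
     (\<forall>i\<in>{1..6}. \<forall>j\<in>{1..6}. E (f i) (f j) \<longleftrightarrow> H i j))"

definition Gamma_free :: "'a set \<Rightarrow> ('a \<Rightarrow> 'a \<Rightarrow> bool) \<Rightarrow> bool" where
  "Gamma_free V E \<longleftrightarrow> \<not> has_induced V E Gamma1_edge \<and> \<not> has_induced V E Gamma2_edge"

end

theory Submission
  imports Defs
begin

text \<open>Let K be a maximum clique, so that V = K + {x, y}. Two vertices of K are adjacent, hence
  only x or y can tell them apart, and for u in K the distance d(u, x) takes one of two values,
  governed by a single bit. So at most 2 ^ |W \<inter> {x, y}| vertices of K lie outside a local
  resolving set W, which gives |W| \<ge> n - 4, with equality only if x, y \<in> W and all four bit
  pairs occur in K; four such clique vertices together with x and y induce Gamma_1 or Gamma_2.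
  Conversely, the four clique vertices of an induced Gamma_1 or Gamma_2 have pairwise different
  neighbourhoods in {v_5, v_6}, so all other vertices form a local resolving set. Finally a case
  analysis of the adjacencies between K and {x, y} always yields three vertices whose mutual
  edges are resolved by the remaining n - 3 vertices.\<close>

lemma walk_0_eq: "walk V E x y 0 \<Longrightarrow> x = y"
  by (erule walk.cases) auto

lemma walk_1_edge: "walk V E x y 1 \<Longrightarrow> E x y"
  by (erule walk.cases) (auto dest: walk_0_eq)

lemma walk_2_common_neighbour: "walk V E x y 2 \<Longrightarrow> \<exists>z. E x z \<and> E z y"
  by (erule walk.cases) (auto simp: numeral_2_eq_2 dest: walk_1_edge[unfolded One_nat_def])

lemma walk_closed:
  assumes "walk V E s t k" "s \<in> S" "\<And>p q. p \<in> S \<Longrightarrow> E p q \<Longrightarrow> q \<in> S"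
  shows "t \<in> S"
  using assms by induction auto

lemma connected_graph_edge_leaving:
  assumes "connected_graph V E" "s \<in> S" "S \<subseteq> V" "t \<in> V - S"
  obtains p q where "p \<in> S" "q \<notin> S" "E p q"
proof -
  obtain k where "walk V E s t k"
    using assms unfolding connected_graph_def by blast
  then show thesis
    using walk_closed[of V E s t k S] assms that by blast
qed

lemma walk_gdist:
  assumes "connected_graph V E" "x \<in> V" "y \<in> V"
  shows "walk V E x y (gdist V E x y)"
proof -
  obtain k where "walk V E x y k"
    using assms unfolding connected_graph_def by blast
  then show ?thesis
    unfolding gdist_def by (rule LeastI)
qed

lemma gdist_le: "walk V E x y k \<Longrightarrow> gdist V E x y \<le> k"
  unfolding gdist_def by (rule Least_le)

lemma gdist_eq_0_iff:
  assumes "connected_graph V E" "x \<in> V" "y \<in> V"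
  shows "gdist V E x y = 0 \<longleftrightarrow> x = y"
  using walk_gdist[OF assms] gdist_le[OF walk_nil[OF assms(2)]] walk_0_eq by fastforce

lemma gdist_eq_1_iff:
  assumes "simple_graph V E" "connected_graph V E" "x \<in> V" "y \<in> V"
  shows "gdist V E x y = 1 \<longleftrightarrow> E x y"
proof
  assume "gdist V E x y = 1"
  then show "E x y"
    using walk_gdist[OF assms(2-4)] walk_1_edge by fastforce
next
  assume xy: "E x y"
  then have "x \<noteq> y"
    using assms(1) unfolding simple_graph_def by auto
  moreover have "walk V E x y 1"
    using xy assms(4) by (auto intro: walk.intros)
  ultimately show "gdist V E x y = 1"
    using gdist_le gdist_eq_0_iff[OF assms(2-4)] by fastforce
qed

lemma gdist_eq_2I:
  assumes "simple_graph V E" "connected_graph V E"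
    and "x \<noteq> y" "\<not> E x y" "E x z" "E z y"
  shows "gdist V E x y = 2"
proof -
  have in_V: "x \<in> V" "y \<in> V" "z \<in> V"
    using assms(1,5,6) unfolding simple_graph_def by auto
  have "walk V E x y 2"
    using assms(5,6) in_V by (auto simp: numeral_2_eq_2 intro: walk.intros)
  then show ?thesis
    using gdist_le[of V E x y 2] assms(3,4) gdist_eq_0_iff[OF assms(2) in_V(1,2)]
      gdist_eq_1_iff[OF assms(1,2) in_V(1,2)] by linarith
qed

lemma gdist_eq_2D:
  assumes "connected_graph V E" "x \<in> V" "y \<in> V" "gdist V E x y = 2"
  obtains z where "E x z" "E z y"
  using walk_gdist[OF assms(1-3)] assms(4) walk_2_common_neighbour by metis

lemma walk_from_twin:
  assumes "walk V E u w k" "w \<noteq> u" "E u v" "\<And>z. z \<noteq> v \<Longrightarrow> E u z \<Longrightarrow> E v z"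
  shows "\<exists>k'\<le>k. walk V E v w k'"
  using assms(1)
proof cases
  case walk_nil
  then show ?thesis
    using assms(2) by simp
next
  case (walk_cons z k')
  show ?thesis
  proof (cases "z = v")
    case True
    then show ?thesis
      using walk_cons le_SucI by blast
  next
    case False
    then have "walk V E v w (Suc k')"
      using walk_cons assms(4) by (blast intro: walk.walk_cons)
    then show ?thesis
      using walk_cons by auto
  qed
qed

lemma gdist_twins_eq:
  assumes "simple_graph V E" "connected_graph V E"
    and "u \<in> V" "v \<in> V" "w \<in> V" "w \<noteq> u" "w \<noteq> v" "E u v"
    and twins: "\<And>z. z \<noteq> u \<Longrightarrow> z \<noteq> v \<Longrightarrow> E u z \<longleftrightarrow> E v z"
  shows "gdist V E u w = gdist V E v w"
proof -
  have irrefl: "\<And>a. \<not> E a a" and sym: "E v u"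
    using assms(1,8) unfolding simple_graph_def by auto
  have "gdist V E v w \<le> gdist V E u w"
    using walk_from_twin[OF walk_gdist[OF assms(2,3,5)] assms(6,8)] twins irrefl
    by (metis gdist_le le_trans)
  moreover have "gdist V E u w \<le> gdist V E v w"
    using walk_from_twin[OF walk_gdist[OF assms(2,4,5)] assms(7) sym] twins irrefl
    by (metis gdist_le le_trans)
  ultimately show ?thesis
    by simp
qed

lemma distinguishes_if_adjacency_differs:
  assumes "simple_graph V E" "connected_graph V E" "u \<in> V" "v \<in> V" "w \<in> V"
    and "E u w \<noteq> E v w"
  shows "distinguishes V E w u v"
  using assms gdist_eq_1_iff[OF assms(1,2)] unfolding distinguishes_def by metis

lemma local_resolving_set_Diff:
  assumes "T \<subseteq> V"
    and "\<And>u v. u \<in> T \<Longrightarrow> v \<in> T \<Longrightarrow> E u v \<Longrightarrow> \<exists>w\<in>V - T. distinguishes V E w u v"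
  shows "local_resolving_set V E (V - T)"
  using assms unfolding local_resolving_set_def by (simp add: double_diff)

lemma distinguishes_sym: "distinguishes V E w u v \<longleftrightarrow> distinguishes V E w v u"
  unfolding distinguishes_def by auto

lemma local_resolving_set_avoiding_three:
  assumes "simple_graph V E" "p \<in> V" "q \<in> V" "r \<in> V" "p \<noteq> q" "p \<noteq> r" "q \<noteq> r"
    and "E p q \<Longrightarrow> \<exists>w\<in>V - {p, q, r}. distinguishes V E w p q"
    and "E p r \<Longrightarrow> \<exists>w\<in>V - {p, q, r}. distinguishes V E w p r"
    and "E q r \<Longrightarrow> \<exists>w\<in>V - {p, q, r}. distinguishes V E w q r"
  shows "\<exists>W. local_resolving_set V E W \<and> card W = card V - 3"
proof (intro exI conjI)
  show "local_resolving_set V E (V - {p, q, r})"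
  proof (rule local_resolving_set_Diff)
    fix u v
    assume "u \<in> {p, q, r}" "v \<in> {p, q, r}" "E u v"
    moreover have "u \<noteq> v"
      using \<open>E u v\<close> assms(1) unfolding simple_graph_def by auto
    ultimately show "\<exists>w\<in>V - {p, q, r}. distinguishes V E w u v"
      using assms(1,8-10) distinguishes_sym[of V E _ u v] unfolding simple_graph_def
      by (auto; metis)
  qed (use assms(2-4) in auto)
  show "card (V - {p, q, r}) = card V - 3"
    using assms(1-7) by (simp add: card_Diff_subset simple_graph_def)
qed

lemma finite_local_resolving_set_cards:
  "finite V \<Longrightarrow> finite {card W | W. local_resolving_set V E W}"
  by (rule finite_subset[of _ "{..card V}"])
    (auto simp: local_resolving_set_def intro: card_mono)

lemma local_metric_dim_le:
  assumes "finite V" "local_resolving_set V E W"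
  shows "local_metric_dim V E \<le> card W"
  unfolding local_metric_dim_def
  using assms finite_local_resolving_set_cards by (blast intro: Min_le)

lemma local_metric_dim_attained:
  assumes "finite V"
  obtains W where "local_resolving_set V E W" "card W = local_metric_dim V E"
proof -
  have "local_resolving_set V E V"
    unfolding local_resolving_set_def by simp
  then have "local_metric_dim V E \<in> {card W | W. local_resolving_set V E W}"
    unfolding local_metric_dim_def
    using assms finite_local_resolving_set_cards by (intro Min_in) auto
  then show thesis
    using that by auto
qed

lemma finite_clique_cards: "finite V \<Longrightarrow> finite {card K | K. is_clique V E K}"
  by (rule finite_subset[of _ "{..card V}"]) (auto simp: is_clique_def intro: card_mono)

lemma card_clique_le_clique_number:
  "finite V \<Longrightarrow> is_clique V E K \<Longrightarrow> card K \<le> clique_number V E"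
  unfolding clique_number_def using finite_clique_cards by (blast intro: Max_ge)

lemma clique_number_attained:
  assumes "finite V"
  obtains K where "is_clique V E K" "card K = clique_number V E"
proof -
  have "is_clique V E {}"
    unfolding is_clique_def by simp
  then have "clique_number V E \<in> {card K | K. is_clique V E K}"
    unfolding clique_number_def using assms finite_clique_cards by (intro Max_in) auto
  then show thesis
    using that by auto
qed

lemma Gamma_edge_5_6:
  assumes "H = Gamma1_edge \<or> H = Gamma2_edge" "i \<in> {1..4}"
  shows "H i 5 \<longleftrightarrow> i \<in> {1, 2}" and "H i 6 \<longleftrightarrow> i \<in> {1, 3}"
proof -
  have "i \<in> {1, 2, 3, 4}"
    using assms(2) by auto
  then show "H i 5 \<longleftrightarrow> i \<in> {1, 2}" "H i 6 \<longleftrightarrow> i \<in> {1, 3}"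
    using assms(1) by (auto simp: Gamma2_edge_def Gamma1_edge_def doubleton_eq_iff)
qed

lemma induced_Gamma_separated:
  assumes "has_induced V E Gamma1_edge \<or> has_induced V E Gamma2_edge"
  obtains f :: "nat \<Rightarrow> 'a" where "inj_on f {1..6}" "f ` {1..6} \<subseteq> V"
    and "\<And>i j. i \<in> {1..4} \<Longrightarrow> j \<in> {1..4} \<Longrightarrow> i \<noteq> j \<Longrightarrow>
      \<exists>k\<in>{5, 6}. E (f i) (f k) \<noteq> E (f j) (f k)"
proof -
  obtain H where H: "H = Gamma1_edge \<or> H = Gamma2_edge" and "has_induced V E H"
    using assms by blast
  then obtain f where inj: "inj_on f {1..6}" and img: "f ` {1..6} \<subseteq> V"
    and edges: "\<And>i j. i \<in> {1..6} \<Longrightarrow> j \<in> {1..6} \<Longrightarrow> E (f i) (f j) \<longleftrightarrow> H i j"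
    unfolding has_induced_def by metis
  have "\<exists>k\<in>{5, 6}. E (f i) (f k) \<noteq> E (f j) (f k)"
    if ij: "i \<in> {1..4}" "j \<in> {1..4}" "i \<noteq> j" for i j
  proof -
    have "H i 5 \<noteq> H j 5 \<or> H i 6 \<noteq> H j 6"
      using Gamma_edge_5_6[OF H ij(1)] Gamma_edge_5_6[OF H ij(2)] ij by auto
    then show ?thesis
      using edges[of i 5] edges[of j 5] edges[of i 6] edges[of j 6] ij(1,2) by auto
  qed
  then show thesis
    using that inj img by blast
qed

lemma local_resolving_set_if_induced_Gamma:
  assumes "simple_graph V E" "connected_graph V E"
    and "has_induced V E Gamma1_edge \<or> has_induced V E Gamma2_edge"
  obtains W where "local_resolving_set V E W" "card W = card V - 4"
proof -
  obtain f :: "nat \<Rightarrow> 'a" where inj: "inj_on f {1..6}" and img: "f ` {1..6} \<subseteq> V"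
    and separated: "\<And>i j. i \<in> {1..4} \<Longrightarrow> j \<in> {1..4} \<Longrightarrow> i \<noteq> j \<Longrightarrow>
      \<exists>k\<in>{5, 6}. E (f i) (f k) \<noteq> E (f j) (f k)"
    using induced_Gamma_separated[OF assms(3)] by blast
  define T where "T = f ` {1..4}"
  have T_V: "T \<subseteq> V"
    using img unfolding T_def by auto
  have outside: "f k \<in> V - T" if k: "k \<in> {5, 6}" for k
  proof
    show "f k \<in> V"
      using k img by auto
    show "f k \<notin> T"
    proof
      assume "f k \<in> T"
      then obtain i where "i \<in> {1..4}" "f k = f i"
        unfolding T_def by blast
      then show False
        using k inj_onD[OF inj, of k i] by auto
    qed
  qed
  have "local_resolving_set V E (V - T)"
  proof (rule local_resolving_set_Diff[OF T_V])
    fix u v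
    assume uv: "u \<in> T" "v \<in> T" "E u v"
    then obtain i j where ij: "i \<in> {1..4}" "j \<in> {1..4}" "u = f i" "v = f j"
      unfolding T_def by blast
    moreover have "i \<noteq> j"
      using uv(3) ij(3,4) assms(1) unfolding simple_graph_def by auto
    ultimately obtain k where "k \<in> {5, 6}" "E u (f k) \<noteq> E v (f k)"
      using separated by blast
    then show "\<exists>w\<in>V - T. distinguishes V E w u v"
      using distinguishes_if_adjacency_differs[OF assms(1,2)] uv(1,2) T_V outside by blast
  qed
  moreover have "card (V - T) = card V - 4"
    using T_V card_image[OF inj_on_subset[OF inj, of "{1..4}"]] assms(1)
    by (simp add: T_def card_Diff_subset finite_subset simple_graph_def)
  ultimately show thesis
    using that by blast
qed

text \<open>For u in the clique K, the distance d(u, x) is determined by this bit: if x has a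
  neighbour in K, d(u, x) is 1 or 2 according to the adjacency of u and x; otherwise y is the
  only neighbour of x, and d(u, x) = d(u, y) + 1 depends only on the adjacency of u and y.\<close>
definition dist_bit :: "'a set \<Rightarrow> ('a \<Rightarrow> 'a \<Rightarrow> bool) \<Rightarrow> 'a \<Rightarrow> 'a \<Rightarrow> 'a \<Rightarrow> bool" where
  "dist_bit K E x y u \<longleftrightarrow> (if \<exists>k\<in>K. E k x then E u x else E u y)"

locale clique_plus_two =
  fixes V :: "'a set" and E :: "'a \<Rightarrow> 'a \<Rightarrow> bool" and K :: "'a set" and x y :: 'a
  assumes simple: "simple_graph V E" and connected: "connected_graph V E"
    and clique: "is_clique V E K"
    and clique_maximum: "\<And>C. is_clique V E C \<Longrightarrow> card C \<le> card K"
    and V_eq: "V = insert x (insert y K)"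
    and x_notin_K: "x \<notin> K" and y_notin_K: "y \<notin> K" and x_neq_y: "x \<noteq> y"
begin

lemma swap: "clique_plus_two V E K y x"
  using simple connected clique clique_maximum V_eq x_notin_K y_notin_K x_neq_y
  by unfold_locales (auto simp: insert_commute)

lemma finite_V: "finite V"
  using simple unfolding simple_graph_def by blast

lemma finite_K: "finite K"
  using finite_V V_eq by auto

lemma card_V: "card V = card K + 2"
  using finite_K x_notin_K y_notin_K x_neq_y V_eq by simp

lemma K_subset_V: "K \<subseteq> V"
  using V_eq by auto

lemma x_in_V: "x \<in> V" and y_in_V: "y \<in> V"
  using V_eq by auto

lemma irrefl: "\<not> E a a"
  using simple unfolding simple_graph_def by blast

lemma edge_sym: "E a b \<Longrightarrow> E b a"
  using simple unfolding simple_graph_def by blast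

lemma edge_in_V: "E a b \<Longrightarrow> a \<in> V \<and> b \<in> V"
  using simple unfolding simple_graph_def by blast

lemma K_edge: "u \<in> K \<Longrightarrow> v \<in> K \<Longrightarrow> u \<noteq> v \<Longrightarrow> E u v"
  using clique unfolding is_clique_def by blast

lemma gdist_edge: "E a b \<Longrightarrow> gdist V E a b = 1"
  using gdist_eq_1_iff[OF simple connected] edge_in_V by blast

lemma exists_K_non_neighbour: "\<exists>k\<in>K. \<not> E k x"
proof (rule ccontr)
  assume "\<not> ?thesis"
  then have "is_clique V E (insert x K)"
    using clique x_in_V edge_sym unfolding is_clique_def by auto
  then show False
    using clique_maximum[of "insert x K"] finite_K x_notin_K by simp
qed

lemma exists_K_neighbour: "\<exists>k\<in>K. E k x \<or> E k y"
proof -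
  obtain k where "k \<in> K"
    using exists_K_non_neighbour by blast
  then obtain p q where "p \<in> {x, y}" "q \<notin> {x, y}" "E p q"
    using connected_graph_edge_leaving[OF connected, of x "{x, y}" k]
      x_in_V y_in_V x_notin_K y_notin_K K_subset_V by blast
  then show ?thesis
    using V_eq edge_in_V edge_sym by blast
qed

lemma adjacent_if_no_K_neighbour:
  assumes "\<forall>k\<in>K. \<not> E k x"
  shows "E x y"
proof -
  obtain q where "q \<noteq> x" "E x q"
    using connected_graph_edge_leaving[OF connected, of x "{x}" y] x_in_V y_in_V x_neq_y
    by blast
  then show ?thesis
    using assms V_eq edge_in_V edge_sym by blast
qed

lemma gdist_from_K_if_K_neighbour:
  assumes "\<exists>k\<in>K. E k x" "u \<in> K"
  shows "gdist V E u x = (if E u x then 1 else 2)"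
proof (cases "E u x")
  case False
  obtain k where "k \<in> K" "E k x"
    using assms(1) by blast
  moreover have "k \<noteq> u"
    using \<open>E k x\<close> False by blast
  ultimately have "gdist V E u x = 2"
    using gdist_eq_2I[OF simple connected] K_edge assms(2) False x_notin_K by metis
  then show ?thesis
    using False by simp
qed (simp add: gdist_edge)

lemma gdist_from_K_if_no_K_neighbour:
  assumes no_neighbour: "\<forall>k\<in>K. \<not> E k x"
    and u: "u \<in> K" and v: "v \<in> K" and adj: "E u y \<longleftrightarrow> E v y"
  shows "gdist V E u x = gdist V E v x"
proof (cases "u = v")
  case False
  show ?thesis
  proof (rule gdist_twins_eq[OF simple connected _ _ x_in_V])
    show "u \<in> V" "v \<in> V" "x \<noteq> u" "x \<noteq> v"
      using u v K_subset_V x_notin_K by auto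
    show "E u v"
      using K_edge u v False by blast
    show "E u z \<longleftrightarrow> E v z" if "z \<noteq> u" "z \<noteq> v" for z
    proof (cases "z \<in> K")
      case True
      then show ?thesis
        using that u v K_edge by blast
    next
      case False
      then show ?thesis
        using no_neighbour adj u v V_eq edge_in_V edge_sym by blast
    qed
  qed
qed simp

lemma gdist_eq_if_dist_bit_eq:
  assumes "u \<in> K" "v \<in> K" "dist_bit K E x y u = dist_bit K E x y v"
  shows "gdist V E u x = gdist V E v x"
proof (cases "\<exists>k\<in>K. E k x")
  case True
  then show ?thesis
    using assms gdist_from_K_if_K_neighbour[OF True] unfolding dist_bit_def by simp
next
  case False
  then have "\<forall>k\<in>K. \<not> E k x" "E u y \<longleftrightarrow> E v y"
    using assms(3) unfolding dist_bit_def by auto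
  then show ?thesis
    using gdist_from_K_if_no_K_neighbour assms(1,2) by blast
qed

lemma inj_on_dist_bits:
  assumes "local_resolving_set V E W"
  shows "inj_on (\<lambda>u. (x \<in> W \<and> dist_bit K E x y u, y \<in> W \<and> dist_bit K E y x u)) (K - W)"
proof (rule inj_onI, rule ccontr)
  interpret swapped: clique_plus_two V E K y x
    by (rule swap)
  fix u v
  assume u: "u \<in> K - W" and v: "v \<in> K - W" and "u \<noteq> v"
    and bits: "(x \<in> W \<and> dist_bit K E x y u, y \<in> W \<and> dist_bit K E y x u)
      = (x \<in> W \<and> dist_bit K E x y v, y \<in> W \<and> dist_bit K E y x v)"
  then have "E u v"
    using K_edge by blast
  then obtain w where w: "w \<in> W" "gdist V E u w \<noteq> gdist V E v w"
    using assms u v K_subset_V unfolding local_resolving_set_def distinguishes_def by blast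
  then have "w \<in> V"
    using assms unfolding local_resolving_set_def by blast
  then consider "w \<in> K" | "w = x" | "w = y"
    using V_eq by blast
  then show False
  proof cases
    case 1
    then have "E u w" "E v w"
      using u v w(1) K_edge by blast+
    then show False
      using w(2) gdist_edge by simp
  next
    case 2
    then show False
      using w bits u v gdist_eq_if_dist_bit_eq by auto
  next
    case 3
    then show False
      using w bits u v swapped.gdist_eq_if_dist_bit_eq by auto
  qed
qed

lemma card_K_diff_local_resolving_set_le:
  assumes "local_resolving_set V E W"
  shows "card (K - W) \<le> (if x \<in> W then 2 else 1) * (if y \<in> W then 2 else 1)"
proof -
  have card_bits: "card {a. a \<longrightarrow> P} = (if P then 2 else 1)" for P
  proof -
    have "{a. a \<longrightarrow> P} = (if P then UNIV else {False})"
      by auto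
    then show ?thesis
      by simp
  qed
  have "(\<lambda>u. (x \<in> W \<and> dist_bit K E x y u, y \<in> W \<and> dist_bit K E y x u)) ` (K - W)
      \<subseteq> {a. a \<longrightarrow> x \<in> W} \<times> {b. b \<longrightarrow> y \<in> W}"
    by auto
  from card_inj_on_le[OF inj_on_dist_bits[OF assms] this]
  show ?thesis
    by (simp add: card_cartesian_product card_bits)
qed

lemma card_V_split:
  assumes "W \<subseteq> V"
  shows "card V + card (W \<inter> {x, y}) = card W + card (K - W) + 2"
proof -
  have "W - K = W \<inter> {x, y}"
    using assms V_eq x_notin_K y_notin_K by auto
  then have "card W = card (W \<inter> K) + card (W \<inter> {x, y})"
    using card_Int_Diff[of W K] assms finite_V finite_subset by metis
  moreover have "card K = card (W \<inter> K) + card (K - W)"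
    using card_Int_Diff[OF finite_K, of W] by (simp add: Int_commute)
  ultimately show ?thesis
    using card_V by simp
qed

lemma card_local_resolving_set_ge:
  assumes "local_resolving_set V E W"
  shows "card V \<le> card W + (if x \<in> W \<and> y \<in> W then 4 else 3)"
proof -
  have "card V + card (W \<inter> {x, y}) = card W + card (K - W) + 2"
    using assms card_V_split unfolding local_resolving_set_def by blast
  moreover have "card (W \<inter> {x, y}) = (if x \<in> W then 1 else 0) + (if y \<in> W then 1 else 0)"
    using x_neq_y by (auto simp: Int_insert_right)
  ultimately show ?thesis
    using card_K_diff_local_resolving_set_le[OF assms] by (auto split: if_splits)
qed

lemma all_dist_bit_pairs_if_tight:
  assumes "local_resolving_set V E W" "card W + 4 \<le> card V"
  shows "\<exists>u\<in>K. dist_bit K E x y u = a \<and> dist_bit K E y x u = b"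
proof -
  let ?bits = "\<lambda>u. (dist_bit K E x y u, dist_bit K E y x u)"
  have xy_W: "x \<in> W \<and> y \<in> W"
  proof (rule ccontr)
    assume "\<not> (x \<in> W \<and> y \<in> W)"
    then have "card V \<le> card W + 3"
      using card_local_resolving_set_ge[OF assms(1)] by (simp only: if_not_P if_False)
    then show False
      using assms(2) by simp
  qed
  then have inj: "inj_on ?bits (K - W)"
    using inj_on_dist_bits[OF assms(1)] by simp
  have "card (W \<inter> {x, y}) = 2"
    using xy_W x_neq_y by (simp add: Int_absorb1)
  then have "4 \<le> card (K - W)"
    using card_V_split[of W] assms unfolding local_resolving_set_def by linarith
  moreover have "card (UNIV :: (bool \<times> bool) set) = 4"
    by (simp flip: UNIV_Times_UNIV add: card_cartesian_product)
  ultimately have "card (?bits ` (K - W)) = card (UNIV :: (bool \<times> bool) set)"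
    using card_image[OF inj] card_mono[of UNIV "?bits ` (K - W)"] by simp
  then have "?bits ` (K - W) = UNIV"
    by (simp add: card_subset_eq)
  then have "(a, b) \<in> ?bits ` (K - W)"
    by simp
  then show ?thesis
    by force
qed

lemma induced_Gamma_if_adjacency_patterns:
  assumes u: "u1 \<in> K" "u2 \<in> K" "u3 \<in> K" "u4 \<in> K"
    and x: "E u1 x" "E u2 x" "\<not> E u3 x" "\<not> E u4 x"
    and y: "E u1 y" "\<not> E u2 y" "E u3 y" "\<not> E u4 y"
  shows "has_induced V E Gamma1_edge \<or> has_induced V E Gamma2_edge"
proof -
  define f :: "nat \<Rightarrow> 'a" where "f i = (if i = 1 then u1 else if i = 2 then u2
    else if i = 3 then u3 else if i = 4 then u4 else if i = 5 then x else y)" for i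
  have six: "{1..6::nat} = {1, 2, 3, 4, 5, 6}"
    by auto
  have distinct: "u1 \<noteq> u2" "u1 \<noteq> u3" "u1 \<noteq> u4" "u2 \<noteq> u3" "u2 \<noteq> u4" "u3 \<noteq> u4"
    using x y by auto
  have outside: "u1 \<noteq> x" "u2 \<noteq> x" "u3 \<noteq> x" "u4 \<noteq> x" "u1 \<noteq> y" "u2 \<noteq> y" "u3 \<noteq> y" "u4 \<noteq> y"
    using u x_notin_K y_notin_K by auto
  have K_edges: "E u1 u2" "E u1 u3" "E u1 u4" "E u2 u3" "E u2 u4" "E u3 u4"
    using K_edge u distinct by auto
  have sym_edges: "E u2 u1" "E u3 u1" "E u4 u1" "E u3 u2" "E u4 u2" "E u4 u3"
    "E x u1" "E x u2" "\<not> E x u3" "\<not> E x u4" "E y u1" "\<not> E y u2" "E y u3" "\<not> E y u4"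
    using K_edges x y edge_sym by blast+
  have loops: "\<not> E u1 u1" "\<not> E u2 u2" "\<not> E u3 u3" "\<not> E u4 u4" "\<not> E x x" "\<not> E y y"
    using irrefl by auto
  have "has_induced V E (if E x y then Gamma2_edge else Gamma1_edge)"
    unfolding has_induced_def
  proof (intro exI conjI)
    show "inj_on f {1..6}"
      unfolding six inj_on_def f_def using distinct outside x_neq_y by auto
    show "f ` {1..6} \<subseteq> V"
      unfolding six f_def using u K_subset_V x_in_V y_in_V by auto
    show "\<forall>i\<in>{1..6}. \<forall>j\<in>{1..6}.
        E (f i) (f j) \<longleftrightarrow> (if E x y then Gamma2_edge else Gamma1_edge) i j"
      unfolding six f_def Gamma2_edge_def Gamma1_edge_def
      using K_edges sym_edges loops x y edge_sym[of x y] edge_sym[of y x]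
      by (simp add: doubleton_eq_iff) blast
  qed
  then show ?thesis
    by (cases "E x y") simp_all
qed

lemma induced_Gamma_if_all_dist_bit_pairs:
  assumes all: "\<And>a b. \<exists>u\<in>K. dist_bit K E x y u = a \<and> dist_bit K E y x u = b"
  shows "has_induced V E Gamma1_edge \<or> has_induced V E Gamma2_edge"
proof -
  have neighbours: "(\<exists>k\<in>K. E k x) \<and> (\<exists>k\<in>K. E k y)"
  proof (rule ccontr)
    assume "\<not> ?thesis"
    moreover obtain u where "u \<in> K" "dist_bit K E x y u" "\<not> dist_bit K E y x u"
      using all by blast
    moreover obtain v where "v \<in> K" "\<not> dist_bit K E x y v" "dist_bit K E y x v"
      using all by blast
    ultimately show False
      unfolding dist_bit_def by (auto split: if_splits)
  qed
  then have bits: "dist_bit K E x y u = E u x" "dist_bit K E y x u = E u y" for u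
    unfolding dist_bit_def by auto
  obtain u1 where "u1 \<in> K" "E u1 x" "E u1 y"
    using all[of True True] bits by blast
  moreover obtain u2 where "u2 \<in> K" "E u2 x" "\<not> E u2 y"
    using all[of True False] bits by blast
  moreover obtain u3 where "u3 \<in> K" "\<not> E u3 x" "E u3 y"
    using all[of False True] bits by blast
  moreover obtain u4 where "u4 \<in> K" "\<not> E u4 x" "\<not> E u4 y"
    using all[of False False] bits by blast
  ultimately show ?thesis
    using induced_Gamma_if_adjacency_patterns by blast
qed

lemma adjacency_distinguishes:
  "a \<in> V \<Longrightarrow> b \<in> V \<Longrightarrow> w \<in> V \<Longrightarrow> E a w \<noteq> E b w \<Longrightarrow> distinguishes V E w a b"
  using distinguishes_if_adjacency_differs[OF simple connected] by blast

lemma upper_bound_if_no_K_neighbour: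
  assumes no_neighbour: "\<forall>k\<in>K. \<not> E k x"
  shows "\<exists>W. local_resolving_set V E W \<and> card W = card V - 3"
proof -
  interpret swapped: clique_plus_two V E K y x
    by (rule swap)
  have "E x y"
    using adjacent_if_no_K_neighbour no_neighbour by blast
  obtain a where a: "a \<in> K" "E a y"
    using exists_K_neighbour no_neighbour by blast
  obtain b where b: "b \<in> K" "\<not> E b y"
    using swapped.exists_K_non_neighbour by blast
  have "gdist V E a x = 2"
    using gdist_eq_2I[OF simple connected, of a x y] a no_neighbour x_notin_K edge_sym \<open>E x y\<close>
    by blast
  moreover have "gdist V E b x \<noteq> 2"
  proof
    assume "gdist V E b x = 2"
    then obtain z where "E b z" "E z x"
      using gdist_eq_2D[OF connected] b K_subset_V x_in_V by blast
    then show False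
      using V_eq edge_in_V b no_neighbour irrefl by blast
  qed
  moreover have "gdist V E y x = 1"
    using gdist_edge edge_sym \<open>E x y\<close> by blast
  ultimately have "distinguishes V E x a b" "distinguishes V E x a y"
    unfolding distinguishes_def by simp_all
  moreover have "x \<in> V - {a, b, y}"
    using x_in_V a b x_notin_K x_neq_y by auto
  ultimately show ?thesis
    using local_resolving_set_avoiding_three[OF simple, of a b y] a b K_subset_V y_in_V y_notin_K
    by auto
qed

lemma upper_bound_if_separated_non_neighbours:
  assumes "p \<in> K" "q \<in> K" "\<not> E p y" "\<not> E q y" "E p x \<noteq> E q x"
  shows "\<exists>W. local_resolving_set V E W \<and> card W = card V - 3"
proof -
  have "x \<in> V - {p, q, y}"
    using x_in_V assms(1,2) x_notin_K x_neq_y by auto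
  moreover have "distinguishes V E x p q"
    using adjacency_distinguishes assms K_subset_V x_in_V by blast
  ultimately show ?thesis
    using local_resolving_set_avoiding_three[OF simple, of p q y] assms K_subset_V y_in_V y_notin_K
    by auto
qed

lemma upper_bound_if_three_patterns:
  assumes "u \<in> K" "v \<in> K" "w \<in> K"
    and "E u x \<noteq> E v x \<or> E u y \<noteq> E v y"
    and "E u x \<noteq> E w x \<or> E u y \<noteq> E w y"
    and "E v x \<noteq> E w x \<or> E v y \<noteq> E w y"
  shows "\<exists>W. local_resolving_set V E W \<and> card W = card V - 3"
proof -
  have separated: "\<exists>z\<in>V - {u, v, w}. distinguishes V E z a b"
    if "a \<in> K" "b \<in> K" "E a x \<noteq> E b x \<or> E a y \<noteq> E b y" for a b
  proof -
    have "x \<in> V - {u, v, w}" "y \<in> V - {u, v, w}"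
      using x_in_V y_in_V assms(1-3) x_notin_K y_notin_K by auto
    then show ?thesis
      using that adjacency_distinguishes K_subset_V by blast
  qed
  show ?thesis
    using local_resolving_set_avoiding_three[OF simple, of u v w] assms K_subset_V
      separated[of u v] separated[of u w] separated[of v w] by auto
qed

lemma exists_K_non_common_neighbour:
  assumes "E x y" "q \<in> K"
  shows "\<exists>c\<in>K - {q}. \<not> E c x \<or> \<not> E c y"
proof (rule ccontr)
  assume "\<not> ?thesis"
  then have "is_clique V E (insert x (insert y (K - {q})))"
    using assms(1) clique x_in_V y_in_V edge_sym unfolding is_clique_def by blast
  then have "card (insert x (insert y (K - {q}))) \<le> card K"
    by (rule clique_maximum)
  moreover have "card K > 0"
    using assms(2) finite_K card_gt_0_iff by blast
  ultimately show False
    using finite_K x_notin_K y_notin_K x_neq_y assms(2) by (simp add: card_Diff_singleton)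
qed

lemma upper_bound_if_equal_adjacency:
  assumes same: "\<forall>u\<in>K. E u x \<longleftrightarrow> E u y" and p: "p \<in> K" "E p x" and q: "q \<in> K" "\<not> E q x"
  shows "\<exists>W. local_resolving_set V E W \<and> card W = card V - 3"
proof -
  have x_out: "x \<in> V - {p, q, y}"
    using x_in_V p q x_notin_K x_neq_y by auto
  have "E p y" "\<not> E q y"
    using same p q by auto
  have "distinguishes V E x p q"
    using adjacency_distinguishes p q K_subset_V x_in_V by blast
  moreover have "\<exists>w\<in>V - {p, q, y}. distinguishes V E w p y"
  proof (cases "E x y")
    case False
    then have "distinguishes V E x p y"
      using adjacency_distinguishes p K_subset_V x_in_V y_in_V edge_sym by blast
    then show ?thesis
      using x_out by blast
  next
    case True
    obtain c where c: "c \<in> K" "c \<noteq> q" "\<not> E c y"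
      using exists_K_non_common_neighbour[OF True q(1)] same by blast
    have "E p c"
      using c p \<open>E p y\<close> K_edge by blast
    moreover have "\<not> E y c"
      using c(3) edge_sym by blast
    ultimately have "distinguishes V E c p y"
      using adjacency_distinguishes c(1) p(1) K_subset_V y_in_V by blast
    moreover have "c \<in> V - {p, q, y}"
      using c \<open>E p c\<close> irrefl K_subset_V y_notin_K by auto
    ultimately show ?thesis
      by blast
  qed
  ultimately show ?thesis
    using local_resolving_set_avoiding_three[OF simple, of p q y] p q \<open>\<not> E q y\<close> K_subset_V
      y_in_V y_notin_K x_out by auto
qed

lemma upper_bound_if_no_common_neighbour:
  assumes p: "p \<in> K" "E p x" "\<not> E p y" and q: "q \<in> K" "\<not> E q x" "E q y"
    and no_common: "\<not> (\<exists>r\<in>K. E r x \<and> E r y)"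
  shows "\<exists>W. local_resolving_set V E W \<and> card W = card V - 3"
proof -
  have x_out: "x \<in> V - {p, q, y}"
    using x_in_V p q x_notin_K x_neq_y by auto
  have "distinguishes V E x p q"
    using adjacency_distinguishes p q K_subset_V x_in_V by blast
  moreover have "distinguishes V E x q y"
  proof -
    have "p \<noteq> q"
      using p q by blast
    then have "gdist V E q x = 2"
      using gdist_eq_2I[OF simple connected, of q x p] p q K_edge x_notin_K by blast
    moreover have "gdist V E y x \<noteq> 2"
    proof
      assume "gdist V E y x = 2"
      then obtain z where "E y z" "E z x"
        using gdist_eq_2D[OF connected] x_in_V y_in_V by blast
      then show False
        using no_common V_eq edge_in_V edge_sym irrefl by blast
    qed
    ultimately show ?thesis
      unfolding distinguishes_def by simp
  qed
  ultimately show ?thesis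
    using local_resolving_set_avoiding_three[OF simple, of p q y] p q K_subset_V y_in_V
      y_notin_K x_out by auto
qed

lemma upper_bound_if_K_neighbours:
  assumes neighbours: "\<exists>k\<in>K. E k x" "\<exists>k\<in>K. E k y"
  shows "\<exists>W. local_resolving_set V E W \<and> card W = card V - 3"
proof -
  interpret swapped: clique_plus_two V E K y x
    by (rule swap)
  show ?thesis
  proof (cases "\<exists>q\<in>K. \<not> E q x \<and> \<not> E q y")
    case True
    then obtain q where q: "q \<in> K" "\<not> E q x" "\<not> E q y"
      by blast
    show ?thesis
    proof (cases "\<exists>p\<in>K. E p x \<noteq> E p y")
      case True
      then obtain p where "p \<in> K" "E p x \<noteq> E p y"
        by blast
      then show ?thesis
        using upper_bound_if_separated_non_neighbours[of p q]
          swapped.upper_bound_if_separated_non_neighbours[of p q] q by blast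
    next
      case False
      then show ?thesis
        using upper_bound_if_equal_adjacency neighbours(1) q by blast
    qed
  next
    case False
    obtain p where p: "p \<in> K" "E p x" "\<not> E p y"
      using swapped.exists_K_non_neighbour False by blast
    obtain q where q: "q \<in> K" "\<not> E q x" "E q y"
      using exists_K_non_neighbour False by blast
    show ?thesis
    proof (cases "\<exists>r\<in>K. E r x \<and> E r y")
      case True
      then obtain r where "r \<in> K" "E r x" "E r y"
        by blast
      then show ?thesis
        using upper_bound_if_three_patterns[of r p q] p q by blast
    next
      case False
      then show ?thesis
        using upper_bound_if_no_common_neighbour p q by blast
    qed
  qed
qed

lemma upper_bound: "\<exists>W. local_resolving_set V E W \<and> card W = card V - 3"
proof -
  interpret swapped: clique_plus_two V E K y x
    by (rule swap)
  show ?thesis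
    using upper_bound_if_no_K_neighbour swapped.upper_bound_if_no_K_neighbour
      upper_bound_if_K_neighbours by blast
qed

lemma local_metric_dim_ge: "card V - 4 \<le> local_metric_dim V E"
proof -
  obtain W where W: "local_resolving_set V E W" "card W = local_metric_dim V E"
    using local_metric_dim_attained[OF finite_V] by blast
  then show ?thesis
    using card_local_resolving_set_ge[OF W(1)] by (simp split: if_splits)
qed

lemma local_metric_dim_le_card_minus_3: "local_metric_dim V E \<le> card V - 3"
  using upper_bound local_metric_dim_le[OF finite_V] by metis

lemma local_metric_dim_eq_card_minus_4_iff:
  assumes "4 \<le> card V"
  shows "local_metric_dim V E = card V - 4 \<longleftrightarrow>
    has_induced V E Gamma1_edge \<or> has_induced V E Gamma2_edge"
proof
  assume "local_metric_dim V E = card V - 4"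
  moreover obtain W where W: "local_resolving_set V E W" "card W = local_metric_dim V E"
    using local_metric_dim_attained[OF finite_V] by blast
  ultimately have "card W + 4 \<le> card V"
    using assms by simp
  then show "has_induced V E Gamma1_edge \<or> has_induced V E Gamma2_edge"
    using induced_Gamma_if_all_dist_bit_pairs all_dist_bit_pairs_if_tight[OF W(1)] by blast
next
  assume "has_induced V E Gamma1_edge \<or> has_induced V E Gamma2_edge"
  then show "local_metric_dim V E = card V - 4"
    using local_resolving_set_if_induced_Gamma[OF simple connected]
      local_metric_dim_le[OF finite_V] local_metric_dim_ge by (metis le_antisym)
qed

end

lemma clique_plus_two_if_clique_number:
  assumes "simple_graph V E" "connected_graph V E"
    and "2 \<le> card V" "clique_number V E = card V - 2"
  obtains K x y where "clique_plus_two V E K x y"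
proof -
  have "finite V"
    using assms(1) unfolding simple_graph_def by blast
  obtain K where K: "is_clique V E K" "card K = card V - 2"
    using clique_number_attained[OF \<open>finite V\<close>] assms(4) by metis
  then have "K \<subseteq> V"
    unfolding is_clique_def by blast
  then have "card (V - K) = 2"
    using K(2) assms(3) \<open>finite V\<close> by (simp add: card_Diff_subset finite_subset)
  then obtain x y where xy: "V - K = {x, y}" "x \<noteq> y"
    by (meson card_2_iff)
  have "clique_plus_two V E K x y"
  proof
    show "card C \<le> card K" if "is_clique V E C" for C
      using card_clique_le_clique_number[OF \<open>finite V\<close> that] assms(4) K(2) by simp
  qed (use assms(1,2) K(1) xy \<open>K \<subseteq> V\<close> in auto)
  then show thesis
    by (rule that)
qed

theorem corollary2p5:
  fixes V :: "'a set" and E :: "'a \<Rightarrow> 'a \<Rightarrow> bool"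
  assumes "simple_graph V E" and "connected_graph V E"
    and "card V \<ge> 5" and "clique_number V E = card V - 2"
  shows "card V - 4 \<le> local_metric_dim V E \<and> local_metric_dim V E \<le> card V - 3
    \<and> (local_metric_dim V E = card V - 3 \<longleftrightarrow> Gamma_free V E)
    \<and> (local_metric_dim V E = card V - 4 \<longleftrightarrow>
         (has_induced V E Gamma1_edge \<or> has_induced V E Gamma2_edge))"
proof -
  obtain K x y where "clique_plus_two V E K x y"
    using clique_plus_two_if_clique_number[OF assms(1,2) _ assms(4)] assms(3) by force
  then interpret clique_plus_two V E K x y .
  show ?thesis
    unfolding Gamma_free_def
    using local_metric_dim_ge local_metric_dim_le_card_minus_3
      local_metric_dim_eq_card_minus_4_iff assms(3) by auto
qed

end
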